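(* Consider an exponential bottleneck game on a graph $G$, a Nash-routing $\mathbf{p}=[p_1,\dots,p_N]$ and a routing $\mathbf{p}^*=[p_1^*,\dots,p_N^*]$ of minimum social cost, and suppose $C^*=C(\mathbf{p}^* )=1$ and $L^*\ge 2$. Let $\hat C=\lceil\max_i\log_2\widetilde C_i(\mathbf{p})\rceil$ and $l_1^*=\log_2(L^*-1)$. Then for every integer $i$ with $1\le i\le \hat C-l_1^*-11$, every non-empty set of players $X\subseteq S^{(i)}$ is not self-sufficient in $\mathbf{p}$.
   Context: Player $\pi_i$ has a strategy set $\mathcal{P}_i$ of paths from $u_i$ to $v_i$; a routing is $\mathbf{p}=[p_1,\dots,p_N]$ with $p_i\in\mathcal{P}_i$. $C_e(\mathbf{p})$ is the number of paths in $\mathbf{p}$ using edge $e$; social cost $C(\mathbf{p})=\max_eC_e(\mathbf{p})$; player cost $\widetilde C_i(\mathbf{p})=\sum_{e\in p_i}2^{C_e(\mathbf{p})}$. A Nash-routing is one in which no player can strictly lower its cost by unilaterally switching to another path in its strategy set. $L^*$ is the maximum length (number of edges) of a path in $\mathbf{p}^*$. Stage $i$ ($1\le i\le\hat C$): $S^{(i)}$ is the set of players $\pi_j$ whose cost in $\mathbf{p}$ satisfies $2^{\hat C-i}+2\le\widetilde C_j(\mathbf{p})\le 2^{\hat C-i+1}$. Self-sufficiency: for a set $S$ of players and $\pi_j\in S$, let $\mathbf{q}_j$ be the routing consisting only of the players in $S$, where every player of $S$ other than $\pi_j$ uses its path from $\mathbf{p}$ and $\pi_j$ uses $p_j^*$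 (congestions in $\mathbf{q}_j$ count only these paths). $S$ is self-sufficient in $\mathbf{p}$ if for every $\pi_j\in S$ the cost of $\pi_j$ in $\mathbf{q}_j$, $\sum_{e\in p_j^*}2^{C_e(\mathbf{q}_j)}$, is at least $\widetilde C_j(\mathbf{p})$. Logarithms are base 2. *)

theory Defs
  imports Complex_Main
begin

text \<open>Players are indexed 0..N-1; a routing is a function from player indices to paths.\<close>

definition graph :: "'v set \<Rightarrow> 'v set set \<Rightarrow> bool" where
  "graph V E \<longleftrightarrow> finite V \<and> finite E \<and> (\<forall>e\<in>E. e \<subseteq> V \<and> card e = 2)"

definition pedges :: "'v list \<Rightarrow> 'v set set" where
  "pedges xs = {{xs ! k, xs ! Suc k} | k. Suc k < length xs}"

definition plen :: "'v list \<Rightarrow> nat" where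
  "plen xs = length xs - 1"

definition is_path :: "'v set set \<Rightarrow> 'v \<Rightarrow> 'v \<Rightarrow> 'v list \<Rightarrow> bool" where
  "is_path E u v xs \<longleftrightarrow> xs \<noteq> [] \<and> hd xs = u \<and> last xs = v \<and> distinct xs
     \<and> (\<forall>k. Suc k < length xs \<longrightarrow> {xs ! k, xs ! Suc k} \<in> E)"

definition valid_routing :: "nat \<Rightarrow> (nat \<Rightarrow> 'v list set) \<Rightarrow> (nat \<Rightarrow> 'v list) \<Rightarrow> bool" where
  "valid_routing N P r \<longleftrightarrow> (\<forall>i<N. r i \<in> P i)"

definition cong :: "nat \<Rightarrow> (nat \<Rightarrow> 'v list) \<Rightarrow> 'v set \<Rightarrow> nat" where
  "cong N r e = card {i. i < N \<and> e \<in> pedges (r i)}"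

definition soc_cost :: "'v set set \<Rightarrow> nat \<Rightarrow> (nat \<Rightarrow> 'v list) \<Rightarrow> nat" where
  "soc_cost E N r = Max (insert 0 (cong N r ` E))"

definition pcost :: "nat \<Rightarrow> (nat \<Rightarrow> 'v list) \<Rightarrow> nat \<Rightarrow> nat" where
  "pcost N r i = (\<Sum>e\<in>pedges (r i). 2 ^ cong N r e)"

definition nash :: "nat \<Rightarrow> (nat \<Rightarrow> 'v list set) \<Rightarrow> (nat \<Rightarrow> 'v list) \<Rightarrow> bool" where
  "nash N P r \<longleftrightarrow> valid_routing N P r \<and>
     (\<forall>i<N. \<forall>q\<in>P i. \<not> pcost N (r(i := q)) i < pcost N r i)"

definition optimal :: "'v set set \<Rightarrow> nat \<Rightarrow> (nat \<Rightarrow> 'v list set) \<Rightarrow> (nat \<Rightarrow> 'v list) \<Rightarrow> bool" where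
  "optimal E N P r \<longleftrightarrow> valid_routing N P r \<and>
     (\<forall>r'. valid_routing N P r' \<longrightarrow> soc_cost E N r \<le> soc_cost E N r')"

definition maxlen :: "nat \<Rightarrow> (nat \<Rightarrow> 'v list) \<Rightarrow> nat" where
  "maxlen N r = Max {plen (r i) | i. i < N}"

definition Chat :: "nat \<Rightarrow> (nat \<Rightarrow> 'v list) \<Rightarrow> int" where
  "Chat N r = \<lceil>Max {log 2 (real (pcost N r i)) | i. i < N}\<rceil>"

definition stage :: "nat \<Rightarrow> (nat \<Rightarrow> 'v list) \<Rightarrow> int \<Rightarrow> nat set" where
  "stage N r i = {j. j < N \<and>
      2 powr (real_of_int (Chat N r - i)) + 2 \<le> real (pcost N r j) \<and>
      real (pcost N r j) \<le> 2 powr (real_of_int (Chat N r - i + 1))}"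

text \<open>Congestion in q_j: only players of S, with j using its path from pstar\<close>
definition cong_q :: "nat set \<Rightarrow> (nat \<Rightarrow> 'v list) \<Rightarrow> (nat \<Rightarrow> 'v list) \<Rightarrow> nat \<Rightarrow> 'v set \<Rightarrow> nat" where
  "cong_q S r rs j e = card {k. k \<in> S \<and> e \<in> pedges ((r(j := rs j)) k)}"

definition self_sufficient :: "nat set \<Rightarrow> nat \<Rightarrow> (nat \<Rightarrow> 'v list) \<Rightarrow> (nat \<Rightarrow> 'v list) \<Rightarrow> bool" where
  "self_sufficient S N r rs \<longleftrightarrow>
     (\<forall>j\<in>S. (\<Sum>e\<in>pedges (rs j). (2::nat) ^ cong_q S r rs j e) \<ge> pcost N r j)"

end

theory Submission
  imports Defs
begin

text \<open>Suppose a non-empty \<open>X \<subseteq> S(i)\<close> were self-sufficient, and let \<open>n(e)\<close> count the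
  players of \<open>X\<close> whose Nash path uses \<open>e\<close>. Summing self-sufficiency over \<open>X\<close> bounds the total
  cost \<open>R\<close> of \<open>X\<close> by the sum of \<open>2^(n(e)+1)\<close> over the optimal paths of \<open>X\<close>. Since \<open>C* = 1\<close>,
  every edge lies on at most one optimal path, and \<open>3 * 2^(n+1) \<le> 8 + 2n * 2^n\<close> turns this
  into \<open>3R \<le> 8 |X| L* + 2 \<Sum>\<^sub>e n(e) 2^n(e) \<le> 8 |X| L* + 2R\<close>, i.e. \<open>R \<le> 8 |X| L*\<close>. But every
  player of the stage pays at least \<open>2^11 (L* - 1) + 2 > 8 L*\<close>.\<close>

lemma sum_sum_eq_sum_card_mult:
  fixes f :: "'e \<Rightarrow> nat"
  assumes "finite X" "finite E" "\<forall>j\<in>X. A j \<subseteq> E"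
  shows "(\<Sum>j\<in>X. \<Sum>e\<in>A j. f e) = (\<Sum>e\<in>E. card {j\<in>X. e \<in> A j} * f e)"
proof -
  have "(\<Sum>j\<in>X. \<Sum>e\<in>A j. f e) = (\<Sum>j\<in>X. \<Sum>e\<in>{e\<in>E. e \<in> A j}. f e)"
    using assms(3) by (intro sum.cong) (auto intro: arg_cong[where f = "sum f"])
  also have "\<dots> = (\<Sum>e\<in>E. \<Sum>j\<in>{j\<in>X. e \<in> A j}. f e)"
    by (rule sum.swap_restrict[OF assms(1,2)])
  finally show ?thesis by simp
qed

lemma three_mult_two_pow_Suc_le: "3 * 2 ^ Suc n \<le> 8 + 2 * n * (2::nat) ^ n"
proof (cases "n < 3")
  case True
  then have "n = 0 \<or> n = 1 \<or> n = 2" by auto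
  then show ?thesis by auto
next
  case False
  then have "6 * (2::nat) ^ n \<le> (2 * n) * 2 ^ n" by (intro mult_le_mono1) simp
  moreover have "3 * 2 ^ Suc n = 6 * (2::nat) ^ n" by simp
  ultimately show ?thesis by linarith
qed

text \<open>\<open>A j\<close> and \<open>B j\<close> play the roles of the edge sets of the Nash and the optimal path of
  player \<open>j\<close>, and \<open>c j\<close> of its cost.\<close>

lemma total_cost_le_if_self_sufficient:
  fixes X :: "'i set" and E :: "'e set" and A B :: "'i \<Rightarrow> 'e set" and c :: "'i \<Rightarrow> nat"
  defines "n e \<equiv> card {k\<in>X. e \<in> A k}"
  assumes fin: "finite X" "finite E"
    and sub: "\<forall>j\<in>X. A j \<subseteq> E" "\<forall>j\<in>X. B j \<subseteq> E"
    and disjoint: "\<forall>e\<in>E. card {j\<in>X. e \<in> B j} \<le> 1"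
    and short: "\<forall>j\<in>X. card (B j) \<le> L"
    and cost_ge: "\<forall>j\<in>X. (\<Sum>e\<in>A j. 2 ^ n e) \<le> c j"
    and cost_le: "\<forall>j\<in>X. c j \<le> (\<Sum>e\<in>B j. 2 ^ Suc (n e))"
  shows "(\<Sum>j\<in>X. c j) \<le> 8 * L * card X"
proof -
  define m where "m e = card {j\<in>X. e \<in> B j}" for e
  define R where "R = (\<Sum>j\<in>X. c j)"
  have "3 * R \<le> 3 * (\<Sum>j\<in>X. \<Sum>e\<in>B j. 2 ^ Suc (n e))"
    unfolding R_def using cost_le by (intro mult_le_mono2 sum_mono) auto
  also have "\<dots> = (\<Sum>e\<in>E. m e * (3 * 2 ^ Suc (n e)))"
    unfolding m_def sum_sum_eq_sum_card_mult[OF fin sub(2)]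
    by (simp add: sum_distrib_left mult_ac)
  also have "\<dots> \<le> (\<Sum>e\<in>E. 8 * m e + 2 * (n e * 2 ^ n e))"
  proof (rule sum_mono)
    fix e assume "e \<in> E"
    then have "m e \<le> 1" using disjoint m_def by auto
    have "m e * (3 * 2 ^ Suc (n e)) \<le> m e * (8 + 2 * n e * 2 ^ n e)"
      using three_mult_two_pow_Suc_le by (rule mult_le_mono2)
    also have "\<dots> = 8 * m e + m e * (2 * n e * 2 ^ n e)" by (simp add: algebra_simps)
    also have "\<dots> \<le> 8 * m e + 2 * (n e * 2 ^ n e)"
      using \<open>m e \<le> 1\<close> mult_le_mono1[of "m e" 1] by simp
    finally show "m e * (3 * 2 ^ Suc (n e)) \<le> 8 * m e + 2 * (n e * 2 ^ n e)" .
  qed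
  also have "\<dots> = 8 * (\<Sum>j\<in>X. card (B j)) + 2 * (\<Sum>j\<in>X. \<Sum>e\<in>A j. 2 ^ n e)"
    using sum_sum_eq_sum_card_mult[OF fin sub(2), of "\<lambda>_. 1"]
      sum_sum_eq_sum_card_mult[OF fin sub(1), of "\<lambda>e. 2 ^ n e"]
    by (simp add: m_def n_def sum.distrib sum_distrib_left)
  also have "\<dots> \<le> 8 * (card X * L) + 2 * R"
    unfolding R_def using short cost_ge sum_bounded_above[of X "\<lambda>j. card (B j)" L]
    by (intro add_mono mult_le_mono2 sum_mono) auto
  finally show ?thesis unfolding R_def by (simp add: mult_ac)
qed

lemma card_pedges_le_plen: "card (pedges xs) \<le> plen xs"
proof -
  have "pedges xs = (\<lambda>k. {xs ! k, xs ! Suc k}) ` {..< length xs - 1}"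
    unfolding pedges_def by auto
  then show ?thesis
    by (metis card_image_le card_lessThan finite_lessThan plen_def)
qed

lemma plen_le_maxlen: "j < N \<Longrightarrow> plen (r j) \<le> maxlen N r"
  unfolding maxlen_def by (intro Max_ge) auto

lemma valid_routing_pedges_subset:
  assumes "valid_routing N P r" "\<forall>i<N. P i \<subseteq> {xs. is_path E (u i) (v i) xs}" "j < N"
  shows "pedges (r j) \<subseteq> E"
  using assms unfolding valid_routing_def is_path_def pedges_def by blast

lemma card_players_using_le_cong:
  "X \<subseteq> {..<N} \<Longrightarrow> card {k\<in>X. e \<in> pedges (r k)} \<le> cong N r e"
  unfolding cong_def by (rule card_mono) auto

lemma cong_le_soc_cost: "finite E \<Longrightarrow> e \<in> E \<Longrightarrow> cong N r e \<le> soc_cost E N r"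
  unfolding soc_cost_def by (intro Max_ge) auto

lemma cong_q_le_Suc:
  assumes "finite X" "j \<in> X"
  shows "cong_q X r rs j e \<le> Suc (card {k\<in>X. e \<in> pedges (r k)})"
proof -
  have "cong_q X r rs j e \<le> card (insert j {k\<in>X. e \<in> pedges (r k)})"
    unfolding cong_q_def using assms(1) by (intro card_mono) auto
  also have "\<dots> \<le> Suc (card {k\<in>X. e \<in> pedges (r k)})"
    by (rule card_insert_le_m1) auto
  finally show ?thesis .
qed

lemma self_sufficient_sum_pcost_le:
  assumes "finite E" "X \<subseteq> {..<N}"
    and "\<forall>j\<in>X. pedges (p j) \<subseteq> E" "\<forall>j\<in>X. pedges (pstar j) \<subseteq> E"
    and "soc_cost E N pstar \<le> 1" "\<forall>j\<in>X. plen (pstar j) \<le> L"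
    and "self_sufficient X N p pstar"
  shows "(\<Sum>j\<in>X. pcost N p j) \<le> 8 * L * card X"
proof (rule total_cost_le_if_self_sufficient[where A = "\<lambda>j. pedges (p j)" and E = E])
  have fin: "finite X" using assms(2) finite_subset by blast
  then show "finite X" .
  show "\<forall>e\<in>E. card {j\<in>X. e \<in> pedges (pstar j)} \<le> 1"
  proof
    fix e assume "e \<in> E"
    have "card {j\<in>X. e \<in> pedges (pstar j)} \<le> cong N pstar e"
      by (rule card_players_using_le_cong[OF assms(2)])
    also have "\<dots> \<le> soc_cost E N pstar" by (rule cong_le_soc_cost[OF assms(1) \<open>e \<in> E\<close>])
    finally show "card {j\<in>X. e \<in> pedges (pstar j)} \<le> 1" using assms(5) by simp
  qed
  show "\<forall>j\<in>X. card (pedges (pstar j)) \<le> L"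
    using assms(6) card_pedges_le_plen order_trans by blast
  show "\<forall>j\<in>X. (\<Sum>e\<in>pedges (p j). 2 ^ card {k\<in>X. e \<in> pedges (p k)}) \<le> pcost N p j"
    unfolding pcost_def using card_players_using_le_cong[OF assms(2)]
    by (auto intro!: sum_mono power_increasing)
  show "\<forall>j\<in>X. pcost N p j \<le> (\<Sum>e\<in>pedges (pstar j). 2 ^ Suc (card {k\<in>X. e \<in> pedges (p k)}))"
  proof
    fix j assume "j \<in> X"
    then have "pcost N p j \<le> (\<Sum>e\<in>pedges (pstar j). 2 ^ cong_q X p pstar j e)"
      using assms(7) unfolding self_sufficient_def by auto
    also have "\<dots> \<le> (\<Sum>e\<in>pedges (pstar j). 2 ^ Suc (card {k\<in>X. e \<in> pedges (p k)}))"
      by (intro sum_mono power_increasing cong_q_le_Suc[OF fin \<open>j \<in> X\<close>]) simp_all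
    finally show "pcost N p j \<le> \<dots>" .
  qed
qed (use assms in auto)

lemma stage_pcost_gt:
  assumes "L \<ge> 2" "j \<in> stage N p i"
    and "real_of_int i \<le> real_of_int (Chat N p) - log 2 (real L - 1) - 11"
  shows "8 * L < pcost N p j"
proof -
  have "2 powr (log 2 (real L - 1) + 11) \<le> 2 powr real_of_int (Chat N p - i)"
    using assms(3) by (intro powr_mono) auto
  moreover have "2 powr (log 2 (real L - 1) + 11) = (real L - 1) * 2048"
    using assms(1) by (simp add: powr_add)
  moreover have "2 powr real_of_int (Chat N p - i) + 2 \<le> real (pcost N p j)"
    using assms(2) unfolding stage_def by auto
  ultimately have "real (8 * L) < real (pcost N p j)" using assms(1) by simp
  then show ?thesis by linarith
qed

theorem lemma2:
  fixes V :: "'v set" and E :: "'v set set" and N :: nat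
    and u v :: "nat \<Rightarrow> 'v" and P :: "nat \<Rightarrow> 'v list set"
    and p pstar :: "nat \<Rightarrow> 'v list"
  assumes "graph V E"
    and "\<forall>i<N. P i \<subseteq> {xs. is_path E (u i) (v i) xs}"
    and "nash N P p"
    and "optimal E N P pstar"
    and "soc_cost E N pstar = 1"
    and "maxlen N pstar \<ge> 2"
  shows "\<forall>i::int. 1 \<le> i \<and> real_of_int i \<le> real_of_int (Chat N p) - log 2 (real (maxlen N pstar) - 1) - 11
      \<longrightarrow> (\<forall>X. X \<noteq> {} \<and> X \<subseteq> stage N p i \<longrightarrow> \<not> self_sufficient X N p pstar)"
proof (intro allI impI notI)
  fix i :: int and X
  let ?L = "maxlen N pstar"
  assume i: "1 \<le> i \<and> real_of_int i \<le> real_of_int (Chat N p) - log 2 (real ?L - 1) - 11"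
    and X: "X \<noteq> {} \<and> X \<subseteq> stage N p i" and "self_sufficient X N p pstar"
  have XN: "X \<subseteq> {..<N}" using X unfolding stage_def by auto
  then have "finite X" using finite_subset by blast
  have "valid_routing N P p" "valid_routing N P pstar"
    using assms(3,4) unfolding nash_def optimal_def by auto
  then have "\<forall>j\<in>X. pedges (p j) \<subseteq> E" "\<forall>j\<in>X. pedges (pstar j) \<subseteq> E"
    using XN valid_routing_pedges_subset[OF _ assms(2)] by auto
  then have "(\<Sum>j\<in>X. pcost N p j) \<le> 8 * ?L * card X"
    using assms(1,5) XN \<open>self_sufficient X N p pstar\<close>
    by (intro self_sufficient_sum_pcost_le) (auto simp: graph_def intro: plen_le_maxlen)
  moreover have "(\<Sum>j\<in>X. 8 * ?L) < (\<Sum>j\<in>X. pcost N p j)"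
    using X i assms(6) \<open>finite X\<close> by (intro sum_strict_mono stage_pcost_gt) auto
  ultimately show False by (simp add: mult_ac)
qed

end
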